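(* There exists a test.
   Context: Let $\varphi:\omega\to\omega^2$ be the bijection with inverse $\langle n,p\rangle:=\varphi^{-1}(n,p)=\left(\sum_{k\leq n+p}k\right)+p$, and write $\varphi(q)=((q)_0,(q)_1)$. A set $E\subseteq\bigcup_{q\in\omega}2^q\times 2^q$ is a test if: (a) for each $q\in\omega$ there is a unique $(s_q,t_q)\in E\cap(2^q\times 2^q)$; (b) for all $m,p\in\omega$ and $u\in 2^{<\omega}$ there is $v\in 2^{<\omega}$ with $(s_p0uv,t_p1uv)\in E$ and $(|t_p1uv|-1)_0=m$; (c) for each $n>0$ there are $q<n$ and $w\in 2^{<\omega}$ with $s_n=s_q0w$ and $t_n=t_q1w$. (Juxtaposition denotes concatenation of finite binary sequences.) *)

theory Defs
  imports Main
begin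

text \<open>Finite binary sequences are rendered as bool lists (False = 0, True = 1);
  2^q is the set of lists of length q.\<close>

definition pair_code :: "nat \<Rightarrow> nat \<Rightarrow> nat" where
  "pair_code n p = (\<Sum>k\<le>n+p. k) + p"

definition phi :: "nat \<Rightarrow> nat \<times> nat" where
  "phi q = (THE x. pair_code (fst x) (snd x) = q)"

definition proj0 :: "nat \<Rightarrow> nat" where
  "proj0 q = fst (phi q)"

definition st_of :: "(bool list \<times> bool list) set \<Rightarrow> nat \<Rightarrow> bool list \<times> bool list" where
  "st_of E q = (THE x. x \<in> E \<and> length (fst x) = q \<and> length (snd x) = q)"

definition is_test :: "(bool list \<times> bool list) set \<Rightarrow> bool" where
  "is_test E \<longleftrightarrow>
     (\<forall>x\<in>E. length (fst x) = length (snd x)) \<and>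
     (\<forall>q. \<exists>!x. x \<in> E \<and> length (fst x) = q \<and> length (snd x) = q) \<and>
     (\<forall>m p u. \<exists>v.
        (fst (st_of E p) @ [False] @ u @ v, snd (st_of E p) @ [True] @ u @ v) \<in> E \<and>
        proj0 (length (snd (st_of E p) @ [True] @ u @ v) - 1) = m) \<and>
     (\<forall>n>0. \<exists>q<n. \<exists>w.
        fst (st_of E n) = fst (st_of E q) @ [False] @ w \<and>
        snd (st_of E n) = snd (st_of E q) @ [True] @ w)"

end

theory Submission
  imports Defs "HOL-Library.Nat_Bijection"
begin

text \<open>The test is built as a tree indexed by the naturals: node n > 0 chooses a parent
  p < n and splits off from (s_p, t_p) with the bits 0 and 1 followed by a common tail, padded
  to length n. Enumerating all triples (m, p, u) injectively by numbers
  n = \<langle>m, \<langle>p, code u\<rangle>\<rangle> + 1, which exceed p + |u| and satisfy (n - 1)_0 = m, and letting node n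
  serve the request (m, p, u) with a tail extending u, meets condition (b).\<close>

lemma pair_code_less:
  assumes "a + b < c + d"
  shows "pair_code a b < pair_code c d"
proof -
  have "pair_code a b \<le> (\<Sum>k\<le>a+b. k) + (a+b)" unfolding pair_code_def by simp
  also have "\<dots> < (\<Sum>k\<le>Suc (a+b). k)" by simp
  also have "\<dots> \<le> (\<Sum>k\<le>c+d. k)" using assms by (intro sum_mono2) auto
  also have "\<dots> \<le> pair_code c d" unfolding pair_code_def by simp
  finally show ?thesis .
qed

lemma pair_code_eq_iff: "pair_code a b = pair_code c d \<longleftrightarrow> a = c \<and> b = d"
proof
  assume eq: "pair_code a b = pair_code c d"
  then have "a + b = c + d"
    using pair_code_less[of a b c d] pair_code_less[of c d a b] by (metis nat_neq_iff)
  with eq show "a = c \<and> b = d" unfolding pair_code_def by simp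
qed simp

lemma add_le_pair_code: "a + b \<le> pair_code a b"
proof -
  have "a + b \<le> (\<Sum>k\<le>a+b. k)"
    using sum_mono2[of "{..a+b}" "{a+b}" "\<lambda>k. k"] by auto
  then show ?thesis unfolding pair_code_def by simp
qed

lemma proj0_pair_code [simp]: "proj0 (pair_code a b) = a"
proof -
  have "phi (pair_code a b) = (a, b)"
    unfolding phi_def by (rule the_equality) (auto simp: pair_code_eq_iff)
  then show ?thesis unfolding proj0_def by simp
qed

lemma length_le_list_encode: "length xs \<le> list_encode xs"
  by (induction xs) (auto intro: le_trans[OF _ le_prod_encode_2])

lemma st_of_range:
  assumes "\<And>n. length (fst (g n)) = n \<and> length (snd (g n)) = n"
  shows "st_of (range g) q = g q"
  unfolding st_of_def using assms by (intro the_equality) auto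

function split_tree :: "(nat \<Rightarrow> nat) \<Rightarrow> (nat \<Rightarrow> bool list) \<Rightarrow> nat \<Rightarrow> bool list \<times> bool list" where
  "split_tree parent tail n =
     (if 0 < n \<and> parent n < n
      then (fst (split_tree parent tail (parent n)) @ False # tail n,
            snd (split_tree parent tail (parent n)) @ True # tail n)
      else ([], []))"
  by auto
termination by (relation "measure (\<lambda>(_, _, n). n)") auto

declare split_tree.simps [simp del]

locale splitting =
  fixes parent :: "nat \<Rightarrow> nat" and tail :: "nat \<Rightarrow> bool list"
  assumes parent_less: "0 < n \<Longrightarrow> parent n < n"
    and length_tail: "0 < n \<Longrightarrow> length (tail n) = n - parent n - 1"
begin

abbreviation node :: "nat \<Rightarrow> bool list \<times> bool list" where
  "node \<equiv> split_tree parent tail"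

lemma node_split:
  "0 < n \<Longrightarrow> node n = (fst (node (parent n)) @ False # tail n, snd (node (parent n)) @ True # tail n)"
  using parent_less by (simp add: split_tree.simps[of _ _ n])

lemma length_node: "length (fst (node n)) = n \<and> length (snd (node n)) = n"
proof (induction n rule: less_induct)
  case (less n)
  show ?case
  proof (cases "n = 0")
    case True
    then show ?thesis by (simp add: split_tree.simps)
  next
    case False
    with less parent_less[of n] length_tail[of n] show ?thesis by (simp add: node_split)
  qed
qed

lemma st_of_node [simp]: "st_of (range node) q = node q"
  using length_node by (rule st_of_range)

lemma is_test_range_node:
  assumes requests: "\<And>m p u. \<exists>n. 0 < n \<and> parent n = p \<and> (\<exists>v. tail n = u @ v) \<and> proj0 (n - 1) = m"
  shows "is_test (range node)"
  unfolding is_test_def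
proof (intro conjI allI impI)
  show "\<forall>x\<in>range node. length (fst x) = length (snd x)"
    using length_node by auto
  show "\<exists>!x. x \<in> range node \<and> length (fst x) = q \<and> length (snd x) = q" for q
    using length_node by (intro ex1I[of _ "node q"]) auto
next
  fix m p u
  obtain n v where n: "0 < n" "parent n = p" "tail n = u @ v" "proj0 (n - 1) = m"
    using requests by blast
  then have "node n = (fst (node p) @ [False] @ u @ v, snd (node p) @ [True] @ u @ v)"
    using node_split by simp
  with length_node[of n] n(4)
  show "\<exists>v. (fst (st_of (range node) p) @ [False] @ u @ v, snd (st_of (range node) p) @ [True] @ u @ v)
          \<in> range node \<and> proj0 (length (snd (st_of (range node) p) @ [True] @ u @ v) - 1) = m"
    by (metis rangeI st_of_node snd_conv)
next
  fix n :: nat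
  assume "0 < n"
  with parent_less node_split show "\<exists>q<n. \<exists>w. fst (st_of (range node) n) = fst (st_of (range node) q) @ [False] @ w \<and>
      snd (st_of (range node) n) = snd (st_of (range node) q) @ [True] @ w"
    by auto
qed

end

definition request :: "nat \<times> nat \<times> bool list \<Rightarrow> nat" where
  "request = (\<lambda>(m, p, u). Suc (pair_code m (pair_code p (list_encode (map of_bool u)))))"

lemma inj_request: "inj request"
proof (rule injI)
  fix x y
  assume "request x = request y"
  then show "x = y"
    by (cases x; cases y)
       (auto simp: request_def pair_code_eq_iff list_encode_eq inj_map_eq_map inj_def of_bool_eq_iff)
qed

lemma request_gt: "p + length u < request (m, p, u)"
  using add_le_pair_code[of m "pair_code p (list_encode (map of_bool u))"]
    add_le_pair_code[of p "list_encode (map of_bool u)"] length_le_list_encode[of "map of_bool u"]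
  unfolding request_def by simp

lemma proj0_request: "proj0 (request (m, p, u) - 1) = m"
  by (simp add: request_def)

definition pad :: "nat \<Rightarrow> bool list \<Rightarrow> bool list" where
  "pad k u = take k (u @ replicate k False)"

lemma length_pad [simp]: "length (pad k u) = k"
  by (simp add: pad_def)

lemma pad_extends: "length u \<le> k \<Longrightarrow> \<exists>v. pad k u = u @ v"
  by (simp add: pad_def)

text \<open>Outside range request, inv request n is an arbitrary triple. Only the parent needs a
  guard there: pad gives the tail the right length whatever it is applied to.\<close>

definition request_parent :: "nat \<Rightarrow> nat" where
  "request_parent n = (if n \<in> range request then fst (snd (inv request n)) else 0)"

definition request_tail :: "nat \<Rightarrow> bool list" where
  "request_tail n = pad (n - request_parent n - 1) (snd (snd (inv request n)))"

lemma request_parent_request [simp]: "request_parent (request (m, p, u)) = p"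
  by (simp add: request_parent_def inv_f_f[OF inj_request])

lemma request_parent_less: "0 < n \<Longrightarrow> request_parent n < n"
proof (cases "n \<in> range request")
  case True
  then obtain m p u where "n = request (m, p, u)" by auto
  with request_gt[of p u m] show ?thesis by simp
qed (simp add: request_parent_def)

interpretation requests: splitting request_parent request_tail
  by unfold_locales (simp_all add: request_parent_less request_tail_def)

theorem lemma3p3:
  shows "\<exists>E. is_test E"
proof
  show "is_test (range requests.node)"
  proof (rule requests.is_test_range_node)
    fix m p u
    let ?n = "request (m, p, u)"
    have "length u \<le> ?n - p - 1"
      using request_gt[of p u m] by linarith
    then have "\<exists>v. request_tail ?n = u @ v"
      by (simp add: request_tail_def inv_f_f[OF inj_request] pad_extends)
    moreover have "0 < ?n"
      using request_gt[of p u m] by linarith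
    ultimately show "\<exists>n. 0 < n \<and> request_parent n = p \<and> (\<exists>v. request_tail n = u @ v) \<and> proj0 (n - 1) = m"
      using proj0_request[of m p u] by (intro exI[of _ ?n]) auto
  qed
qed

end
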